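(* Let $E$ be a smooth functional on $\mathcal P(\Omega)$ that is $\beta$-strongly convex ($\beta\ge0$) with respect to the Fisher-Rao metric. Let $\rho_t,\rho^*$ be smooth positive probability densities with $\rho_t\ne\rho^*$, $R_t=\sqrt{\rho_t}$, $R^*=\sqrt{\rho^*}$, $H_t=\cos^{-1}\big(\int R_tR^*dx\big)$ and $$T_t(x)=\frac{2H_t}{\sin(H_t)}\,\frac{R^*(x)-R_t(x)\cos(H_t)}{R_t(x)}.$$ Then $$E(\rho^* )\ge E(\rho_t)+\int\Big(\frac{\delta E}{\delta\rho_t}-\mathbb{E}_{\rho_t}\Big[\frac{\delta E}{\delta\rho_t}\Big]\Big)T_t\rho_tdx+\frac\beta2\int T_t^2\rho_tdx.$$
   Context: Fisher-Rao metric: $g_\rho(\sigma_1,\sigma_2)=\int\Phi_1\rho(\Phi_2-\mathbb{E}_\rho[\Phi_2])dx$ where $\sigma_i=\rho(\Phi_i-\mathbb{E}_\rho[\Phi_i])$, and $\mathbb{E}_\rho[\Phi]=\int\Phi\rho dx$. $\beta$-strong convexity means $g_\rho(\mathrm{Hess}E(\rho)\sigma,\sigma)\ge\beta g_\rho(\sigma,\sigma)$ for all $\rho$ and all $\sigma$ with $\int\sigma=0$, with Hessian w.r.t. the Fisher-Rao metric (equivalently $\frac{d^2}{ds^2}E(\gamma(s))\ge\beta g(\dot\gamma,\dot\gamma)$ along Fisher-Rao geodesics). $\frac{\delta E}{\delta\rho}$ is the $L^2$ first variation. *)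

theory Defs
  imports "HOL-Analysis.Analysis"
begin

fun Ck_on :: "nat \<Rightarrow> ('a::euclidean_space) set \<Rightarrow> ('a \<Rightarrow> real) \<Rightarrow> bool" where
  "Ck_on 0 \<Omega> f = continuous_on \<Omega> f"
| "Ck_on (Suc k) \<Omega> f =
     (f differentiable_on \<Omega> \<and> (\<forall>v. Ck_on k \<Omega> (\<lambda>x. frechet_derivative f (at x) v)))"

definition smooth_on :: "('a::euclidean_space) set \<Rightarrow> ('a \<Rightarrow> real) \<Rightarrow> bool" where
  "smooth_on \<Omega> f \<longleftrightarrow> (\<forall>k. Ck_on k \<Omega> f)"

definition smooth_pos_density :: "('a::euclidean_space) set \<Rightarrow> ('a \<Rightarrow> real) \<Rightarrow> bool" where
  "smooth_pos_density \<Omega> \<rho> \<longleftrightarrow>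
     smooth_on \<Omega> \<rho> \<and> (\<forall>x\<in>\<Omega>. \<rho> x > 0) \<and> (\<forall>x. x \<notin> \<Omega> \<longrightarrow> \<rho> x = 0) \<and>
     set_integrable lebesgue \<Omega> \<rho> \<and> (LINT x:\<Omega>|lebesgue. \<rho> x) = 1"

definition fr_angle :: "('a::euclidean_space) set \<Rightarrow> ('a \<Rightarrow> real) \<Rightarrow> ('a \<Rightarrow> real) \<Rightarrow> real" where
  "fr_angle \<Omega> \<rho>0 \<rho>1 = arccos (LINT x:\<Omega>|lebesgue. sqrt (\<rho>0 x) * sqrt (\<rho>1 x))"

text \<open>Square root of the Fisher-Rao geodesic (great circle on the sphere of root densities),
  its s-derivative, the geodesic itself and its velocity, for s in [0,1].\<close>
definition fr_root :: "('a::euclidean_space) set \<Rightarrow> ('a \<Rightarrow> real) \<Rightarrow> ('a \<Rightarrow> real) \<Rightarrow> real \<Rightarrow> 'a \<Rightarrow> real" where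
  "fr_root \<Omega> \<rho>0 \<rho>1 s x = (let H = fr_angle \<Omega> \<rho>0 \<rho>1 in
      (sin ((1 - s) * H) * sqrt (\<rho>0 x) + sin (s * H) * sqrt (\<rho>1 x)) / sin H)"

definition fr_root_dot :: "('a::euclidean_space) set \<Rightarrow> ('a \<Rightarrow> real) \<Rightarrow> ('a \<Rightarrow> real) \<Rightarrow> real \<Rightarrow> 'a \<Rightarrow> real" where
  "fr_root_dot \<Omega> \<rho>0 \<rho>1 s x = (let H = fr_angle \<Omega> \<rho>0 \<rho>1 in
      H * (- cos ((1 - s) * H) * sqrt (\<rho>0 x) + cos (s * H) * sqrt (\<rho>1 x)) / sin H)"

definition fr_geodesic :: "('a::euclidean_space) set \<Rightarrow> ('a \<Rightarrow> real) \<Rightarrow> ('a \<Rightarrow> real) \<Rightarrow> real \<Rightarrow> 'a \<Rightarrow> real" where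
  "fr_geodesic \<Omega> \<rho>0 \<rho>1 s x = (fr_root \<Omega> \<rho>0 \<rho>1 s x)\<^sup>2"

definition fr_velocity :: "('a::euclidean_space) set \<Rightarrow> ('a \<Rightarrow> real) \<Rightarrow> ('a \<Rightarrow> real) \<Rightarrow> real \<Rightarrow> 'a \<Rightarrow> real" where
  "fr_velocity \<Omega> \<rho>0 \<rho>1 s x = 2 * fr_root \<Omega> \<rho>0 \<rho>1 s x * fr_root_dot \<Omega> \<rho>0 \<rho>1 s x"

text \<open>Fisher-Rao metric g_rho(sigma,sigma) = int sigma^2 / rho (= int Phi rho (Phi - E_rho Phi)).\<close>
definition fr_metric :: "('a::euclidean_space) set \<Rightarrow> ('a \<Rightarrow> real) \<Rightarrow> ('a \<Rightarrow> real) \<Rightarrow> ('a \<Rightarrow> real) \<Rightarrow> real" where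
  "fr_metric \<Omega> \<rho> \<sigma>1 \<sigma>2 = (LINT x:\<Omega>|lebesgue. \<sigma>1 x * \<sigma>2 x / \<rho> x)"

end

(*
  Let \<gamma> be the Fisher-Rao geodesic from \<rho>t to \<rho>s: its square root is a great-circle arc of
  angle H on the unit sphere of root densities, so \<gamma> has constant speed g(\<gamma>',\<gamma>') = 4 H\<^sup>2.
  Strong convexity makes \<phi>(s) = E(\<gamma> s) satisfy \<phi>'' \<ge> 4 \<beta> H\<^sup>2, whence
  E \<rho>s = \<phi> 1 \<ge> \<phi> 0 + \<phi>' 0 + 2 \<beta> H\<^sup>2.  The initial velocity of \<gamma> is T \<rho>t, so
  \<phi>' 0 = \<integral> dE T \<rho>t; subtracting the mean of dE changes nothing because \<integral> T \<rho>t = 0, and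
  \<integral> T\<^sup>2 \<rho>t = g(\<gamma>' 0, \<gamma>' 0) = 4 H\<^sup>2.
*)
theory Submission
  imports Defs
begin

lemma smooth_pos_densityD:
  assumes "smooth_pos_density \<Omega> \<rho>"
  shows smooth_pos_density_nonneg: "0 \<le> \<rho> x"
    and smooth_pos_density_pos: "x \<in> \<Omega> \<Longrightarrow> 0 < \<rho> x"
    and smooth_pos_density_continuous_on: "continuous_on \<Omega> \<rho>"
    and smooth_pos_density_set_integrable: "set_integrable lebesgue \<Omega> \<rho>"
    and smooth_pos_density_integral: "(LINT x:\<Omega>|lebesgue. \<rho> x) = 1"
  using assms unfolding smooth_pos_density_def smooth_on_def
  by (metis Ck_on.simps(1) less_le order_refl)+

lemma smooth_pos_density_sets:
  assumes "smooth_pos_density \<Omega> \<rho>"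
  shows "\<Omega> \<in> sets lebesgue"
proof -
  have "(\<lambda>x. indicator \<Omega> x *\<^sub>R \<rho> x) = \<rho>"
    using assms by (intro ext) (auto simp: smooth_pos_density_def indicator_def)
  then have [measurable]: "\<rho> \<in> borel_measurable lebesgue"
    using smooth_pos_density_set_integrable[OF assms] unfolding set_integrable_def by auto
  have "\<Omega> = {x \<in> space lebesgue. 0 < \<rho> x}"
    using assms by (auto simp: smooth_pos_density_def)
  also have "\<dots> \<in> sets lebesgue"
    by measurable
  finally show ?thesis .
qed

lemma set_integrable_sqrt_mult:
  fixes f g :: "'a \<Rightarrow> real"
  assumes f: "set_integrable M A f" and g: "set_integrable M A g"
    and f_nonneg: "\<And>x. x \<in> A \<Longrightarrow> 0 \<le> f x" and g_nonneg: "\<And>x. x \<in> A \<Longrightarrow> 0 \<le> g x"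
  shows "set_integrable M A (\<lambda>x. sqrt (f x) * sqrt (g x))"
proof (rule set_integrable_bound[where f = "\<lambda>x. f x + g x"])
  show "set_integrable M A (\<lambda>x. f x + g x)"
    using f g by (rule set_integral_add)
  have "(\<lambda>x. indicator A x *\<^sub>R (sqrt (f x) * sqrt (g x)))
      = (\<lambda>x. sqrt (indicator A x *\<^sub>R f x) * sqrt (indicator A x *\<^sub>R g x))"
    by (auto simp: indicator_def)
  then show "set_borel_measurable M A (\<lambda>x. sqrt (f x) * sqrt (g x))"
    using f g unfolding set_integrable_def set_borel_measurable_def by simp
  have "sqrt (f x) * sqrt (g x) \<le> f x + g x" if "x \<in> A" for x
    using arith_geo_mean_sqrt[OF f_nonneg g_nonneg, OF that that]
      f_nonneg[OF that] g_nonneg[OF that] by (simp add: real_sqrt_mult)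
  then show "AE x in M. x \<in> A \<longrightarrow> norm (sqrt (f x) * sqrt (g x)) \<le> norm (f x + g x)"
    using f_nonneg g_nonneg by (auto intro!: AE_I2)
qed

lemma set_integral_pos_if_continuous:
  fixes f :: "'a::euclidean_space \<Rightarrow> real"
  assumes "open \<Omega>" "continuous_on \<Omega> f" and f_integrable: "set_integrable lebesgue \<Omega> f"
    and nonneg: "\<And>x. x \<in> \<Omega> \<Longrightarrow> 0 \<le> f x" and "x0 \<in> \<Omega>" "0 < f x0"
  shows "0 < (LINT x:\<Omega>|lebesgue. f x)"
proof -
  have "(f \<longlongrightarrow> f x0) (nhds x0)"
    using assms continuous_on_eq_continuous_at[of \<Omega> f]
    by (simp add: isCont_def tendsto_at_iff_tendsto_nhds)
  then have "\<forall>\<^sub>F y in nhds x0. f x0 / 2 < f y \<and> y \<in> \<Omega>"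
    using assms by (intro eventually_conj order_tendstoD(1) eventually_nhds_in_open) auto
  then obtain e where e: "0 < e" "\<And>y. y \<in> ball x0 e \<Longrightarrow> f x0 / 2 < f y \<and> y \<in> \<Omega>"
    unfolding eventually_nhds_metric by (auto simp: dist_commute)
  define g where "g = (\<lambda>x. indicator (ball x0 e) x * (f x0 / 2))"
  have g_on_\<Omega>: "(\<lambda>x. indicator \<Omega> x *\<^sub>R g x) = g"
    using e(2) by (intro ext) (auto simp: g_def indicator_def)
  have "integrable lebesgue g"
    unfolding g_def using emeasure_lborel_ball_finite[of x0 e]
    by (intro integrable_mult_left integrable_real_indicator) auto
  then have g_integrable: "set_integrable lebesgue \<Omega> g"
    unfolding set_integrable_def g_on_\<Omega> .
  have "0 < measure lebesgue (ball x0 e) * (f x0 / 2)"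
    using content_ball_pos[OF e(1)] \<open>0 < f x0\<close> by (simp add: measure_completion)
  also have "\<dots> = (LINT x:\<Omega>|lebesgue. g x)"
    unfolding set_lebesgue_integral_def g_on_\<Omega> unfolding g_def by (simp add: measure_completion)
  also have "\<dots> \<le> (LINT x:\<Omega>|lebesgue. f x)"
    using g_integrable f_integrable
    by (rule set_integral_mono) (use nonneg e(2) in \<open>auto simp: g_def indicator_def less_imp_le\<close>)
  finally show ?thesis .
qed

lemma increment_le_if_deriv_le:
  fixes f g f' g' :: "real \<Rightarrow> real"
  assumes "a \<le> b"
    and f: "\<And>x. x \<in> {a..b} \<Longrightarrow> (f has_real_derivative f' x) (at x within {a..b})"
    and g: "\<And>x. x \<in> {a..b} \<Longrightarrow> (g has_real_derivative g' x) (at x within {a..b})"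
    and deriv_le: "\<And>x. a < x \<Longrightarrow> x < b \<Longrightarrow> g' x \<le> f' x"
  shows "g b - g a \<le> f b - f a"
proof -
  have "f a - g a \<le> f b - g b"
  proof (rule DERIV_nonneg_imp_increasing_open[OF \<open>a \<le> b\<close>])
    fix x assume x: "a < x" "x < b"
    then have "((\<lambda>r. f r - g r) has_real_derivative f' x - g' x) (at x)"
      using f[of x] g[of x] x by (intro DERIV_diff) (auto simp: at_within_Icc_at)
    then show "\<exists>y. ((\<lambda>r. f r - g r) has_real_derivative y) (at x) \<and> 0 \<le> y"
      using deriv_le[OF x] by auto
  next
    show "continuous_on {a..b} (\<lambda>r. f r - g r)"
      using DERIV_continuous_on[OF f] DERIV_continuous_on[OF g] by (intro continuous_intros)
  qed
  then show ?thesis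
    by simp
qed

lemma taylor_lower_bound_if_deriv2_ge:
  fixes f f' f'' :: "real \<Rightarrow> real"
  assumes "a \<le> b"
    and f: "\<And>x. x \<in> {a..b} \<Longrightarrow> (f has_real_derivative f' x) (at x within {a..b})"
    and f': "\<And>x. x \<in> {a..b} \<Longrightarrow> (f' has_real_derivative f'' x) (at x within {a..b})"
    and f''_ge: "\<And>x. x \<in> {a..b} \<Longrightarrow> K \<le> f'' x"
  shows "f a + f' a * (b - a) + K / 2 * (b - a)\<^sup>2 \<le> f b"
proof -
  have f'_ge: "f' a + K * (x - a) \<le> f' x" if "x \<in> {a..b}" for x
  proof -
    have "K * x - K * a \<le> f' x - f' a"
    proof (rule increment_le_if_deriv_le[where g = "\<lambda>r. K * r" and g' = "\<lambda>_. K" and f' = f''])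
      show "(f' has_real_derivative f'' y) (at y within {a..x})" if "y \<in> {a..x}" for y
        using that \<open>x \<in> {a..b}\<close> by (intro DERIV_subset[OF f']) auto
      show "K \<le> f'' y" if "a < y" "y < x" for y
        using that \<open>x \<in> {a..b}\<close> f''_ge by auto
    qed (use that in \<open>auto intro!: derivative_eq_intros\<close>)
    then show ?thesis
      by (simp add: algebra_simps)
  qed
  have "(f' a * b + K / 2 * (b - a)\<^sup>2) - (f' a * a + K / 2 * (a - a)\<^sup>2) \<le> f b - f a"
  proof (rule increment_le_if_deriv_le[OF \<open>a \<le> b\<close> f,
        where g = "\<lambda>r. f' a * r + K / 2 * (r - a)\<^sup>2" and g' = "\<lambda>r. f' a + K * (r - a)"])
    show "f' a + K * (x - a) \<le> f' x" if "a < x" "x < b" for x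
      using that f'_ge by auto
  qed (auto intro!: derivative_eq_intros)
  then show ?thesis
    by (simp add: algebra_simps)
qed

lemma set_integral_mult_centered:
  fixes d w :: "'a \<Rightarrow> real"
  assumes w: "set_integrable M A w" and mean_zero: "(LINT x:A|M. w x) = 0"
  shows "(LINT x:A|M. (d x - c) * w x) = (LINT x:A|M. d x * w x)"
proof (cases "set_integrable M A (\<lambda>x. d x * w x)")
  case True
  have "(LINT x:A|M. (d x - c) * w x) = (LINT x:A|M. d x * w x - c * w x)"
    by (simp add: left_diff_distrib)
  also have "\<dots> = (LINT x:A|M. d x * w x) - c * (LINT x:A|M. w x)"
    using True w by (subst set_integral_diff) auto
  finally show ?thesis
    using mean_zero by simp
next
  case False
  have "\<not> set_integrable M A (\<lambda>x. (d x - c) * w x)"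
  proof
    assume "set_integrable M A (\<lambda>x. (d x - c) * w x)"
    then have "set_integrable M A (\<lambda>x. (d x - c) * w x + c * w x)"
      using w by (intro set_integral_add(1)) auto
    then show False
      using False by (simp add: algebra_simps)
  qed
  with False show ?thesis
    by (simp add: set_integrable_def set_lebesgue_integral_def not_integrable_integral_eq)
qed

definition bhattacharyya :: "('a::euclidean_space) set \<Rightarrow> ('a \<Rightarrow> real) \<Rightarrow> ('a \<Rightarrow> real) \<Rightarrow> real" where
  "bhattacharyya \<Omega> \<rho>0 \<rho>1 = (LINT x:\<Omega>|lebesgue. sqrt (\<rho>0 x) * sqrt (\<rho>1 x))"

lemma fr_angle_eq_arccos_bhattacharyya:
  "fr_angle \<Omega> \<rho>0 \<rho>1 = arccos (bhattacharyya \<Omega> \<rho>0 \<rho>1)"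
  unfolding fr_angle_def bhattacharyya_def ..

lemma
  assumes \<rho>0: "smooth_pos_density \<Omega> \<rho>0" and \<rho>1: "smooth_pos_density \<Omega> \<rho>1"
    and f_eq: "\<And>x. x \<in> \<Omega> \<Longrightarrow> f x = a * \<rho>0 x + b * (sqrt (\<rho>0 x) * sqrt (\<rho>1 x)) + d * \<rho>1 x"
  shows set_integrable_root_quadratic: "set_integrable lebesgue \<Omega> f"
    and set_integral_root_quadratic: "(LINT x:\<Omega>|lebesgue. f x) = a + b * bhattacharyya \<Omega> \<rho>0 \<rho>1 + d"
proof -
  note integrable = smooth_pos_density_set_integrable[OF \<rho>0] smooth_pos_density_set_integrable[OF \<rho>1]
    set_integrable_sqrt_mult[OF smooth_pos_density_set_integrable[OF \<rho>0]
      smooth_pos_density_set_integrable[OF \<rho>1] smooth_pos_density_nonneg[OF \<rho>0] smooth_pos_density_nonneg[OF \<rho>1]]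
  have \<Omega>: "\<Omega> \<in> sets lebesgue"
    using smooth_pos_density_sets[OF \<rho>0] .
  show "set_integrable lebesgue \<Omega> f"
    using f_eq integrable by (subst set_integrable_cong[OF refl refl f_eq]) auto
  have "(LINT x:\<Omega>|lebesgue. f x)
      = (LINT x:\<Omega>|lebesgue. a * \<rho>0 x + b * (sqrt (\<rho>0 x) * sqrt (\<rho>1 x)) + d * \<rho>1 x)"
    using \<Omega> f_eq by (intro set_lebesgue_integral_cong) auto
  also have "\<dots> = a + b * bhattacharyya \<Omega> \<rho>0 \<rho>1 + d"
    using integrable smooth_pos_density_integral[OF \<rho>0] smooth_pos_density_integral[OF \<rho>1]
    by (simp add: set_integral_add bhattacharyya_def)
  finally show "(LINT x:\<Omega>|lebesgue. f x) = a + b * bhattacharyya \<Omega> \<rho>0 \<rho>1 + d" .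
qed

lemma bhattacharyya_bounds:
  assumes "open \<Omega>" and \<rho>0: "smooth_pos_density \<Omega> \<rho>0" and \<rho>1: "smooth_pos_density \<Omega> \<rho>1"
    and distinct: "\<exists>x\<in>\<Omega>. \<rho>0 x \<noteq> \<rho>1 x"
  shows "0 \<le> bhattacharyya \<Omega> \<rho>0 \<rho>1" and "bhattacharyya \<Omega> \<rho>0 \<rho>1 < 1"
proof -
  note nonneg = smooth_pos_density_nonneg[OF \<rho>0] smooth_pos_density_nonneg[OF \<rho>1]
  have "set_integrable lebesgue \<Omega> (\<lambda>x. sqrt (\<rho>0 x) * sqrt (\<rho>1 x))"
    by (rule set_integrable_root_quadratic[OF \<rho>0 \<rho>1, where a = 0 and b = 1 and d = 0]) simp
  then have "(LINT x:\<Omega>|lebesgue. 0) \<le> bhattacharyya \<Omega> \<rho>0 \<rho>1"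
    unfolding bhattacharyya_def using nonneg by (intro set_integral_mono) auto
  then show "0 \<le> bhattacharyya \<Omega> \<rho>0 \<rho>1"
    by simp
  define D where "D x = (sqrt (\<rho>0 x) - sqrt (\<rho>1 x))\<^sup>2" for x
  have D_eq: "D x = 1 * \<rho>0 x + (-2) * (sqrt (\<rho>0 x) * sqrt (\<rho>1 x)) + 1 * \<rho>1 x" for x
    using nonneg unfolding D_def by (simp add: power2_diff)
  obtain x0 where "x0 \<in> \<Omega>" "\<rho>0 x0 \<noteq> \<rho>1 x0"
    using distinct by blast
  then have "0 < D x0"
    using nonneg unfolding D_def by auto
  then have "0 < (LINT x:\<Omega>|lebesgue. D x)"
    using \<open>open \<Omega>\<close> \<open>x0 \<in> \<Omega>\<close> smooth_pos_density_continuous_on[OF \<rho>0] smooth_pos_density_continuous_on[OF \<rho>1]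
    by (intro set_integral_pos_if_continuous set_integrable_root_quadratic[OF \<rho>0 \<rho>1 D_eq])
       (auto simp: D_def intro!: continuous_intros)
  also have "(LINT x:\<Omega>|lebesgue. D x) = 2 - 2 * bhattacharyya \<Omega> \<rho>0 \<rho>1"
    by (simp add: set_integral_root_quadratic[OF \<rho>0 \<rho>1 D_eq])
  finally show "bhattacharyya \<Omega> \<rho>0 \<rho>1 < 1"
    by simp
qed

lemma sin_add_squared:
  fixes u v :: real
  shows "(sin (u + v))\<^sup>2 = (cos u)\<^sup>2 + (cos v)\<^sup>2 - 2 * cos u * cos v * cos (u + v)"
proof -
  have "sin u * sin u = 1 - cos u * cos u" "sin v * sin v = 1 - cos v * cos v"
    using sin_squared_eq[of u] sin_squared_eq[of v] by (simp_all add: power2_eq_square)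
  then show ?thesis
    unfolding cos_add sin_add power2_eq_square by algebra
qed

text \<open>The paper's \<open>T\<close>: the geodesic from \<open>\<rho>0\<close> to \<open>\<rho>1\<close> starts with velocity \<open>T \<rho>0\<close>.\<close>
definition fr_log_potential :: "('a::euclidean_space) set \<Rightarrow> ('a \<Rightarrow> real) \<Rightarrow> ('a \<Rightarrow> real) \<Rightarrow> 'a \<Rightarrow> real" where
  "fr_log_potential \<Omega> \<rho>0 \<rho>1 x = (let H = fr_angle \<Omega> \<rho>0 \<rho>1 in
      2 * H / sin H * (sqrt (\<rho>1 x) - sqrt (\<rho>0 x) * cos H) / sqrt (\<rho>0 x))"

locale distinct_smooth_densities =
  fixes \<Omega> :: "('a::euclidean_space) set" and \<rho>0 \<rho>1 :: "'a \<Rightarrow> real"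
  assumes open_\<Omega>: "open \<Omega>"
    and \<rho>0: "smooth_pos_density \<Omega> \<rho>0" and \<rho>1: "smooth_pos_density \<Omega> \<rho>1"
    and distinct: "\<exists>x\<in>\<Omega>. \<rho>0 x \<noteq> \<rho>1 x"
begin

abbreviation "H \<equiv> fr_angle \<Omega> \<rho>0 \<rho>1"
abbreviation "T \<equiv> fr_log_potential \<Omega> \<rho>0 \<rho>1"

lemma fr_angle_bounds: "0 < H" "H < pi"
  using arccos_lt_bounded bhattacharyya_bounds[OF open_\<Omega> \<rho>0 \<rho>1 distinct]
  unfolding fr_angle_eq_arccos_bhattacharyya by auto

lemma cos_fr_angle: "cos H = bhattacharyya \<Omega> \<rho>0 \<rho>1"
  using bhattacharyya_bounds[OF open_\<Omega> \<rho>0 \<rho>1 distinct]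
  unfolding fr_angle_eq_arccos_bhattacharyya by (simp add: cos_arccos)

lemma sin_fr_angle_pos: "0 < sin H"
  using fr_angle_bounds by (simp add: sin_gt_zero)

lemma fr_geodesic_start: "fr_geodesic \<Omega> \<rho>0 \<rho>1 0 = \<rho>0"
  using sin_fr_angle_pos smooth_pos_density_nonneg[OF \<rho>0]
  by (intro ext) (simp add: fr_geodesic_def fr_root_def)

lemma fr_geodesic_end: "fr_geodesic \<Omega> \<rho>0 \<rho>1 1 = \<rho>1"
  using sin_fr_angle_pos smooth_pos_density_nonneg[OF \<rho>1]
  by (intro ext) (simp add: fr_geodesic_def fr_root_def)

lemma fr_velocity_start:
  assumes "x \<in> \<Omega>"
  shows "fr_velocity \<Omega> \<rho>0 \<rho>1 0 x = T x * \<rho>0 x"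
proof -
  define u where "u = sqrt (\<rho>0 x)"
  have "0 < u" "\<rho>0 x = u\<^sup>2"
    using smooth_pos_density_pos[OF \<rho>0 assms] by (simp_all add: u_def)
  then show ?thesis
    using sin_fr_angle_pos
    unfolding fr_velocity_def fr_root_def fr_root_dot_def fr_log_potential_def Let_def u_def[symmetric]
    by (simp add: field_simps power2_eq_square)
qed

lemma fr_root_pos:
  assumes s: "s \<in> {0..1}" and x: "x \<in> \<Omega>"
  shows "0 < fr_root \<Omega> \<rho>0 \<rho>1 s x"
proof -
  have sin_nonneg: "0 \<le> sin (r * H)" if "r \<in> {0..1}" for r
    using that fr_angle_bounds by (intro sin_ge_zero) (auto intro: mult_left_le_one_le[THEN order_trans])
  have "0 < sin ((1 - s) * H) * sqrt (\<rho>0 x) + sin (s * H) * sqrt (\<rho>1 x)"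
  proof (cases "s = 1")
    case False
    with s fr_angle_bounds have "0 < (1 - s) * H" "(1 - s) * H < pi"
      by (auto intro: mult_left_le_one_le[THEN le_less_trans])
    then have "0 < sin ((1 - s) * H)"
      by (rule sin_gt_zero)
    then show ?thesis
      using x sin_nonneg[OF s] smooth_pos_density_pos[OF \<rho>0] smooth_pos_density_nonneg[OF \<rho>1]
      by (intro add_pos_nonneg mult_pos_pos mult_nonneg_nonneg) auto
  qed (use x sin_fr_angle_pos smooth_pos_density_pos[OF \<rho>1] in simp)
  then show ?thesis
    using sin_fr_angle_pos by (simp add: fr_root_def Let_def)
qed

lemma fr_metric_velocity:
  assumes s: "s \<in> {0..1}"
  shows "fr_metric \<Omega> (fr_geodesic \<Omega> \<rho>0 \<rho>1 s) (fr_velocity \<Omega> \<rho>0 \<rho>1 s) (fr_velocity \<Omega> \<rho>0 \<rho>1 s)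
    = 4 * H\<^sup>2"
proof -
  define a where "a = cos ((1 - s) * H)"
  define b where "b = cos (s * H)"
  define k where "k = (H / sin H)\<^sup>2"
  have speed: "fr_velocity \<Omega> \<rho>0 \<rho>1 s x * fr_velocity \<Omega> \<rho>0 \<rho>1 s x / fr_geodesic \<Omega> \<rho>0 \<rho>1 s x
      = (4 * k * a\<^sup>2) * \<rho>0 x + (- 8 * k * a * b) * (sqrt (\<rho>0 x) * sqrt (\<rho>1 x)) + (4 * k * b\<^sup>2) * \<rho>1 x"
    if x: "x \<in> \<Omega>" for x
  proof -
    define u where "u = sqrt (\<rho>0 x)"
    define w where "w = sqrt (\<rho>1 x)"
    have "fr_velocity \<Omega> \<rho>0 \<rho>1 s x * fr_velocity \<Omega> \<rho>0 \<rho>1 s x / fr_geodesic \<Omega> \<rho>0 \<rho>1 s x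
        = 4 * (fr_root_dot \<Omega> \<rho>0 \<rho>1 s x)\<^sup>2"
      using fr_root_pos[OF s x] unfolding fr_velocity_def fr_geodesic_def
      by (simp add: field_simps power2_eq_square)
    also have "fr_root_dot \<Omega> \<rho>0 \<rho>1 s x = H / sin H * (b * w - a * u)"
      using sin_fr_angle_pos by (simp add: fr_root_dot_def Let_def a_def b_def u_def w_def field_simps)
    also have "4 * (H / sin H * (b * w - a * u))\<^sup>2 = 4 * k * (b * w - a * u)\<^sup>2"
      by (simp add: k_def power_mult_distrib power_divide)
    also have "\<dots> = (4 * k * a\<^sup>2) * u\<^sup>2 + (- 8 * k * a * b) * (u * w) + (4 * k * b\<^sup>2) * w\<^sup>2"
      by (simp add: power2_eq_square algebra_simps)
    finally show ?thesis
      using smooth_pos_density_nonneg[OF \<rho>0] smooth_pos_density_nonneg[OF \<rho>1] by (simp add: u_def w_def)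
  qed
  have "fr_metric \<Omega> (fr_geodesic \<Omega> \<rho>0 \<rho>1 s) (fr_velocity \<Omega> \<rho>0 \<rho>1 s) (fr_velocity \<Omega> \<rho>0 \<rho>1 s)
      = 4 * k * a\<^sup>2 + (- 8 * k * a * b) * bhattacharyya \<Omega> \<rho>0 \<rho>1 + 4 * k * b\<^sup>2"
    unfolding fr_metric_def by (rule set_integral_root_quadratic[OF \<rho>0 \<rho>1 speed])
  also have "\<dots> = 4 * k * (a\<^sup>2 + b\<^sup>2 - 2 * a * b * cos ((1 - s) * H + s * H))"
    by (simp add: cos_fr_angle algebra_simps)
  also have "\<dots> = 4 * k * (sin H)\<^sup>2"
    unfolding a_def b_def sin_add_squared[of "(1 - s) * H" "s * H", symmetric] by (simp add: algebra_simps)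
  also have "\<dots> = 4 * H\<^sup>2"
    using sin_fr_angle_pos by (simp add: k_def field_simps)
  finally show ?thesis .
qed

lemma fr_log_potential_times_density:
  assumes "x \<in> \<Omega>"
  shows "T x * \<rho>0 x = (- 2 * H / sin H * cos H) * \<rho>0 x + (2 * H / sin H) * (sqrt (\<rho>0 x) * sqrt (\<rho>1 x)) + 0 * \<rho>1 x"
proof -
  define u where "u = sqrt (\<rho>0 x)"
  have "0 < u" "\<rho>0 x = u\<^sup>2"
    using smooth_pos_density_pos[OF \<rho>0 assms] by (simp_all add: u_def)
  then show ?thesis
    using sin_fr_angle_pos unfolding fr_log_potential_def Let_def u_def[symmetric]
    by (simp add: field_simps power2_eq_square)
qed

lemma set_integrable_fr_log_potential: "set_integrable lebesgue \<Omega> (\<lambda>x. T x * \<rho>0 x)"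
  by (rule set_integrable_root_quadratic[OF \<rho>0 \<rho>1 fr_log_potential_times_density])

lemma fr_log_potential_mean_zero: "(LINT x:\<Omega>|lebesgue. T x * \<rho>0 x) = 0"
proof -
  have "(LINT x:\<Omega>|lebesgue. T x * \<rho>0 x) = - 2 * H / sin H * cos H + 2 * H / sin H * bhattacharyya \<Omega> \<rho>0 \<rho>1 + 0"
    by (rule set_integral_root_quadratic[OF \<rho>0 \<rho>1 fr_log_potential_times_density])
  then show ?thesis
    by (simp add: cos_fr_angle)
qed

lemma fr_log_potential_norm: "(LINT x:\<Omega>|lebesgue. (T x)\<^sup>2 * \<rho>0 x) = 4 * H\<^sup>2"
proof -
  have "(LINT x:\<Omega>|lebesgue. (T x)\<^sup>2 * \<rho>0 x)
      = fr_metric \<Omega> (fr_geodesic \<Omega> \<rho>0 \<rho>1 0) (fr_velocity \<Omega> \<rho>0 \<rho>1 0) (fr_velocity \<Omega> \<rho>0 \<rho>1 0)"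
    unfolding fr_metric_def fr_geodesic_start
    using smooth_pos_density_sets[OF \<rho>0] smooth_pos_density_pos[OF \<rho>0]
    by (intro set_lebesgue_integral_cong) (auto simp: fr_velocity_start power2_eq_square)
  also have "\<dots> = 4 * H\<^sup>2"
    by (simp add: fr_metric_velocity)
  finally show ?thesis .
qed

lemma set_integral_fr_velocity_start:
  "(LINT x:\<Omega>|lebesgue. d x * fr_velocity \<Omega> \<rho>0 \<rho>1 0 x) = (LINT x:\<Omega>|lebesgue. (d x - c) * T x * \<rho>0 x)"
proof -
  have "(LINT x:\<Omega>|lebesgue. d x * fr_velocity \<Omega> \<rho>0 \<rho>1 0 x) = (LINT x:\<Omega>|lebesgue. d x * (T x * \<rho>0 x))"
    using smooth_pos_density_sets[OF \<rho>0]
    by (intro set_lebesgue_integral_cong) (auto simp: fr_velocity_start)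
  then show ?thesis
    using set_integral_mult_centered[OF set_integrable_fr_log_potential fr_log_potential_mean_zero]
    by (simp add: mult.assoc)
qed

lemma lower_bound_along_fr_geodesic:
  fixes E :: "('a \<Rightarrow> real) \<Rightarrow> real" and E' E'' :: "real \<Rightarrow> real" and \<beta> :: real
  assumes E': "\<And>s. s \<in> {0..1} \<Longrightarrow>
      ((\<lambda>r. E (fr_geodesic \<Omega> \<rho>0 \<rho>1 r)) has_real_derivative E' s) (at s within {0..1})"
    and E'': "\<And>s. s \<in> {0..1} \<Longrightarrow> (E' has_real_derivative E'' s) (at s within {0..1})"
    and E''_ge: "\<And>s. s \<in> {0..1} \<Longrightarrow>
      \<beta> * fr_metric \<Omega> (fr_geodesic \<Omega> \<rho>0 \<rho>1 s) (fr_velocity \<Omega> \<rho>0 \<rho>1 s) (fr_velocity \<Omega> \<rho>0 \<rho>1 s) \<le> E'' s"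
  shows "E \<rho>0 + E' 0 + \<beta> / 2 * (LINT x:\<Omega>|lebesgue. (T x)\<^sup>2 * \<rho>0 x) \<le> E \<rho>1"
proof -
  have "E (fr_geodesic \<Omega> \<rho>0 \<rho>1 0) + E' 0 * (1 - 0) + \<beta> * (4 * H\<^sup>2) / 2 * (1 - 0)\<^sup>2
      \<le> E (fr_geodesic \<Omega> \<rho>0 \<rho>1 1)"
    using E''_ge fr_metric_velocity by (intro taylor_lower_bound_if_deriv2_ge[OF _ E' E'']) auto
  then show ?thesis
    by (simp add: fr_geodesic_start fr_geodesic_end fr_log_potential_norm)
qed

end

theorem proposition9:
  fixes \<Omega> :: "('a::euclidean_space) set"
    and E :: "('a \<Rightarrow> real) \<Rightarrow> real"
    and dE :: "('a \<Rightarrow> real) \<Rightarrow> 'a \<Rightarrow> real"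
    and \<beta> :: real
    and \<rho>t \<rho>s :: "'a \<Rightarrow> real"
  assumes open_\<Omega>: "open \<Omega>"
    and beta_nonneg: "\<beta> \<ge> 0"
    \<comment> \<open>dE is the L^2 first variation of E\<close>
    and first_variation:
      "\<And>\<rho> h. smooth_pos_density \<Omega> \<rho> \<Longrightarrow> smooth_on \<Omega> h \<Longrightarrow>
         (\<exists>K. compact K \<and> K \<subseteq> \<Omega> \<and> (\<forall>x. x \<notin> K \<longrightarrow> h x = 0)) \<Longrightarrow>
         (LINT x:\<Omega>|lebesgue. h x) = 0 \<Longrightarrow>
         ((\<lambda>eps. E (\<lambda>x. \<rho> x + eps * h x)) has_real_derivative
            (LINT x:\<Omega>|lebesgue. dE \<rho> x * h x)) (at 0)"
    \<comment> \<open>smoothness of E: chain rule along Fisher-Rao geodesics\<close>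
    and smooth_chain:
      "\<And>\<rho>0 \<rho>1 s. smooth_pos_density \<Omega> \<rho>0 \<Longrightarrow> smooth_pos_density \<Omega> \<rho>1 \<Longrightarrow>
         (\<exists>x\<in>\<Omega>. \<rho>0 x \<noteq> \<rho>1 x) \<Longrightarrow> s \<in> {0..1} \<Longrightarrow>
         ((\<lambda>r. E (fr_geodesic \<Omega> \<rho>0 \<rho>1 r)) has_real_derivative
            (LINT x:\<Omega>|lebesgue. dE (fr_geodesic \<Omega> \<rho>0 \<rho>1 s) x * fr_velocity \<Omega> \<rho>0 \<rho>1 s x))
           (at s within {0..1})"
    \<comment> \<open>beta-strong convexity along Fisher-Rao geodesics\<close>
    and strong_convex:
      "\<And>\<rho>0 \<rho>1. smooth_pos_density \<Omega> \<rho>0 \<Longrightarrow> smooth_pos_density \<Omega> \<rho>1 \<Longrightarrow>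
         (\<exists>x\<in>\<Omega>. \<rho>0 x \<noteq> \<rho>1 x) \<Longrightarrow>
         \<exists>E''. \<forall>s\<in>{0..1}.
           ((\<lambda>r. LINT x:\<Omega>|lebesgue. dE (fr_geodesic \<Omega> \<rho>0 \<rho>1 r) x * fr_velocity \<Omega> \<rho>0 \<rho>1 r x)
              has_real_derivative E'' s) (at s within {0..1}) \<and>
           E'' s \<ge> \<beta> * fr_metric \<Omega> (fr_geodesic \<Omega> \<rho>0 \<rho>1 s)
                        (fr_velocity \<Omega> \<rho>0 \<rho>1 s) (fr_velocity \<Omega> \<rho>0 \<rho>1 s)"
    and rho_t: "smooth_pos_density \<Omega> \<rho>t"
    and rho_s: "smooth_pos_density \<Omega> \<rho>s"
    and distinct: "\<exists>x\<in>\<Omega>. \<rho>t x \<noteq> \<rho>s x"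
  shows "let H = arccos (LINT x:\<Omega>|lebesgue. sqrt (\<rho>t x) * sqrt (\<rho>s x));
             T = (\<lambda>x. 2 * H / sin H * (sqrt (\<rho>s x) - sqrt (\<rho>t x) * cos H) / sqrt (\<rho>t x))
         in E \<rho>s \<ge> E \<rho>t
              + (LINT x:\<Omega>|lebesgue. (dE \<rho>t x - (LINT y:\<Omega>|lebesgue. dE \<rho>t y * \<rho>t y)) * T x * \<rho>t x)
              + \<beta> / 2 * (LINT x:\<Omega>|lebesgue. (T x)\<^sup>2 * \<rho>t x)"
proof -
  interpret distinct_smooth_densities \<Omega> \<rho>t \<rho>s
    using open_\<Omega> rho_t rho_s distinct by unfold_locales
  obtain E'' where "\<forall>s\<in>{0..1}.
      ((\<lambda>r. LINT x:\<Omega>|lebesgue. dE (fr_geodesic \<Omega> \<rho>t \<rho>s r) x * fr_velocity \<Omega> \<rho>t \<rho>s r x)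
        has_real_derivative E'' s) (at s within {0..1}) \<and>
      \<beta> * fr_metric \<Omega> (fr_geodesic \<Omega> \<rho>t \<rho>s s) (fr_velocity \<Omega> \<rho>t \<rho>s s) (fr_velocity \<Omega> \<rho>t \<rho>s s) \<le> E'' s"
    using strong_convex[OF rho_t rho_s distinct] by blast
  then have "E \<rho>t + (LINT x:\<Omega>|lebesgue. dE (fr_geodesic \<Omega> \<rho>t \<rho>s 0) x * fr_velocity \<Omega> \<rho>t \<rho>s 0 x)
      + \<beta> / 2 * (LINT x:\<Omega>|lebesgue. (T x)\<^sup>2 * \<rho>t x) \<le> E \<rho>s"
    using smooth_chain[OF rho_t rho_s distinct] by (intro lower_bound_along_fr_geodesic) auto
  moreover have "2 * H / sin H * (sqrt (\<rho>s x) - sqrt (\<rho>t x) * cos H) / sqrt (\<rho>t x) = T x" for x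
    unfolding fr_log_potential_def Let_def ..
  ultimately show ?thesis
    unfolding Let_def fr_angle_def[symmetric] fr_geodesic_start
    by (simp add: set_integral_fr_velocity_start[where c = "LINT y:\<Omega>|lebesgue. dE \<rho>t y * \<rho>t y"])
qed

end
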